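(* Let $(X,\|\cdot\|)$ be a Banach space and let $\{v_n\}_{n\in\mathbb{N}}\subset X$ be a sequence such that $\|v_{n+m}\|\le\|v_n+v_m\|$ for all $n,m\in\mathbb{N}$. Assume that either (i) there exists $i\in\mathbb{N}$ with $v_i=0$, or (ii) $v_n\neq0$ for all $n\in\mathbb{N}$ and the set $\left\{\frac{v_n}{\|v_n\|}\right\}_{n\in\mathbb{N}}$ is a uniformly convex subset of $X$. Then the limit $\lim_{n\to\infty}\frac{v_n}{n}$ exists in $X$.
   Context: $\mathbb{N}=\{1,2,3,\dots\}$. A subset $S$ of a normed space $X$ is called uniformly convex if for every $\varepsilon>0$ there exists $\delta\in(0,1)$ such that for all $u,v\in S$ with $\|u\|=\|v\|=1$ and $\|u-v\|\ge\varepsilon$ we have $\|u+v\|\le 2-\delta$. *)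

theory Defs
  imports "HOL-Analysis.Analysis"
begin

definition uniformly_convex_set :: "'a::real_normed_vector set \<Rightarrow> bool" where
  "uniformly_convex_set S \<longleftrightarrow>
     (\<forall>\<epsilon>>0. \<exists>\<delta>. 0 < \<delta> \<and> \<delta> < 1 \<and>
        (\<forall>u\<in>S. \<forall>v\<in>S. norm u = 1 \<longrightarrow> norm v = 1 \<longrightarrow> norm (u - v) \<ge> \<epsilon> \<longrightarrow>
            norm (u + v) \<le> 2 - \<delta>))"

end

theory Submission
  imports Defs
begin

text \<open>
  By Fekete's lemma \<open>norm (v n) / n\<close> tends to \<open>A = inf (norm (v n) / n)\<close>, and
  \<open>n A \<le> norm (v n)\<close>. If \<open>A = 0\<close>, which is forced when some \<open>v i = 0\<close>, then \<open>v n / n\<close>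
  tends to 0; if \<open>A > 0\<close> it suffices that the directions \<open>sgn (v n)\<close> form a Cauchy sequence.
  Since \<open>norm (v (n + m)) \<le> norm (v n + v m)\<close>, uniform convexity makes \<open>sgn (v n)\<close> and
  \<open>sgn (v m)\<close> close as soon as the defect \<open>norm (v n) + norm (v m) - norm (v (n + m))\<close> is
  small compared with the smaller of the two norms. For a multiple \<open>T = k p\<close> the defects of
  the pairs \<open>(p, T + j p)\<close>, \<open>j < k\<close>, telescope to \<open>k norm (v p) + norm (v T) - norm (v (2 T))\<close>,
  which is small against \<open>T A\<close> once \<open>norm (v j) / j\<close> is close to \<open>A\<close> for \<open>j \<ge> p\<close>; so some
  direction in the block \<open>[T, 2 T)\<close> is close to \<open>sgn (v p)\<close>. Any two indices of the block have
  small defect as well, and taking for \<open>T\<close> a common multiple links any two directions.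
\<close>

lemma subadditive_mult_add_le:
  fixes a :: "nat \<Rightarrow> real"
  assumes subadd: "\<And>n m. n \<ge> 1 \<Longrightarrow> m \<ge> 1 \<Longrightarrow> a (n + m) \<le> a n + a m"
    and "p \<ge> 1" "r \<ge> 1"
  shows "a (q * p + r) \<le> real q * a p + a r"
proof (induction q)
  case (Suc q)
  have "a (Suc q * p + r) = a (p + (q * p + r))"
    by (simp add: algebra_simps)
  also have "\<dots> \<le> a p + a (q * p + r)"
    using assms by (intro subadd) auto
  also have "\<dots> \<le> a p + (real q * a p + a r)"
    using Suc.IH by simp
  finally show ?case
    by (simp add: algebra_simps)
qed simp

lemma mult_Inf_quotient_le:
  fixes a :: "nat \<Rightarrow> real"
  assumes nonneg: "\<And>n. n \<ge> 1 \<Longrightarrow> 0 \<le> a n" and "n \<ge> 1"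
  shows "real n * (INF k\<in>{1..}. a k / real k) \<le> a n"
proof -
  have "bdd_below ((\<lambda>k. a k / real k) ` {1..})"
    using nonneg by (intro bdd_belowI2[of _ 0]) auto
  then have "(INF k\<in>{1..}. a k / real k) \<le> a n / real n"
    using \<open>n \<ge> 1\<close> by (intro cInf_lower) auto
  then show ?thesis
    using \<open>n \<ge> 1\<close> by (simp add: field_simps)
qed

lemma subadditive_quotient_le:
  fixes a :: "nat \<Rightarrow> real"
  assumes nonneg: "\<And>n. n \<ge> 1 \<Longrightarrow> 0 \<le> a n"
    and subadd: "\<And>n m. n \<ge> 1 \<Longrightarrow> m \<ge> 1 \<Longrightarrow> a (n + m) \<le> a n + a m"
    and "p \<ge> 1" "n \<ge> 1"
  shows "a n / real n \<le> a p / real p + (\<Sum>r = 1..p. a r) / real n"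
proof -
  define q r where "q = (n - 1) div p" and "r = (n - 1) mod p + 1"
  have n: "n = q * p + r" and r: "1 \<le> r" "r \<le> p"
    using assms(3,4) by (auto simp: q_def r_def Suc_leI)
  have "a r \<le> (\<Sum>r = 1..p. a r)"
    using r nonneg by (intro member_le_sum) auto
  moreover have "real q * a p \<le> real n * (a p / real p)"
  proof -
    have "real q * a p = real (q * p) * (a p / real p)"
      using \<open>p \<ge> 1\<close> by simp
    also have "\<dots> \<le> real n * (a p / real p)"
      using n nonneg[OF \<open>p \<ge> 1\<close>] by (intro mult_right_mono) auto
    finally show ?thesis .
  qed
  ultimately have "a n \<le> real n * (a p / real p) + (\<Sum>r = 1..p. a r)"
    using subadditive_mult_add_le[OF subadd \<open>p \<ge> 1\<close> r(1), of q] n by simp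
  then show ?thesis
    using \<open>n \<ge> 1\<close> by (simp add: field_simps)
qed

lemma subadditive_quotient_tendsto_Inf:
  fixes a :: "nat \<Rightarrow> real"
  assumes nonneg: "\<And>n. n \<ge> 1 \<Longrightarrow> 0 \<le> a n"
    and subadd: "\<And>n m. n \<ge> 1 \<Longrightarrow> m \<ge> 1 \<Longrightarrow> a (n + m) \<le> a n + a m"
  shows "(\<lambda>n. a n / real n) \<longlonglongrightarrow> (INF n\<in>{1..}. a n / real n)"
    (is "_ \<longlonglongrightarrow> ?A")
proof (rule order_tendstoI)
  fix c assume "c < ?A"
  have below: "c < a n / real n" if "n \<ge> 1" for n
  proof -
    have "c * real n < ?A * real n"
      using \<open>c < ?A\<close> that by simp
    also have "\<dots> \<le> a n"
      using mult_Inf_quotient_le[of a n] nonneg that by (simp add: mult.commute)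
    finally show ?thesis
      using that by (simp add: field_simps)
  qed
  show "eventually (\<lambda>n. c < a n / real n) sequentially"
    using eventually_ge_at_top[of 1] by eventually_elim (rule below)
next
  fix c assume "?A < c"
  moreover have "bdd_below ((\<lambda>n. a n / real n) ` {1..})"
    using nonneg by (intro bdd_belowI2[of _ 0]) auto
  ultimately obtain p where p: "p \<ge> 1" "a p / real p < c"
    by (auto simp: cInf_less_iff)
  define B where "B = (\<Sum>r = 1..p. a r)"
  have "(\<lambda>n. a p / real p + B / real n) \<longlonglongrightarrow> a p / real p + 0"
    by (intro tendsto_add tendsto_const lim_const_over_n)
  then have "eventually (\<lambda>n. a p / real p + B / real n < c) sequentially"
    using p(2) by (auto dest: order_tendstoD)
  then show "eventually (\<lambda>n. a n / real n < c) sequentially"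
    using eventually_ge_at_top[of 1]
    by eventually_elim (use subadditive_quotient_le[OF nonneg subadd p(1)] in \<open>fastforce simp: B_def\<close>)
qed

lemma linear_lower_bound_le:
  fixes a :: "nat \<Rightarrow> real"
  assumes "A \<ge> 0" "\<And>n. n \<ge> 1 \<Longrightarrow> real n * A \<le> a n" "i \<le> j" "j \<ge> 1"
  shows "real i * A \<le> a j"
proof -
  have "real i * A \<le> real j * A"
    using assms(1,3) by (intro mult_right_mono) auto
  then show ?thesis
    using assms(2)[OF assms(4)] by linarith
qed

lemma sum_defects_telescope:
  fixes a :: "nat \<Rightarrow> real"
  shows "(\<Sum>j<k. a p + a (T + j * p) - a (T + Suc j * p)) = real k * a p + a T - a (T + k * p)"
proof -
  have "(\<Sum>j<k. a p + a (T + j * p) - a (T + Suc j * p))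
      = (\<Sum>j<k. a p + (a (T + j * p) - a (T + Suc j * p)))"
    by (simp add: add_diff_eq)
  also have "\<dots> = real k * a p + a T - a (T + k * p)"
    by (simp only: sum.distrib sum_lessThan_telescope'[of "\<lambda>j. a (T + j * p)"]) simp
  finally show ?thesis .
qed

lemma exists_defect_le_average:
  fixes a :: "nat \<Rightarrow> real"
  assumes "k \<ge> 1"
  shows "\<exists>j<k. real k * (a p + a (T + j * p) - a (T + Suc j * p))
                 \<le> real k * a p + a T - a (T + k * p)"
proof (rule ccontr)
  assume "\<not> ?thesis"
  then have "(\<Sum>j<k. real k * a p + a T - a (T + k * p))
      < (\<Sum>j<k. real k * (a p + a (T + j * p) - a (T + Suc j * p)))"
    using assms by (intro sum_strict_mono) (auto simp: lessThan_empty_iff)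
  then show False
    by (simp only: sum_distrib_left[symmetric] sum_defects_telescope sum_constant) simp
qed

lemma small_defect_partner:
  fixes a :: "nat \<Rightarrow> real"
  assumes "A > 0" "\<delta> > 0" "p \<ge> 1" "k \<ge> 1" "N \<le> p"
    and lower: "\<And>n. n \<ge> 1 \<Longrightarrow> real n * A \<le> a n"
    and upper: "\<And>n. n \<ge> N \<Longrightarrow> a n < real n * (A + \<delta> * A / 4)"
  obtains m where "k * p \<le> m" "m < 2 * (k * p)" "a p + a m - a (p + m) < \<delta> * min (a p) (a m)"
proof -
  define T where "T = k * p"
  obtain j where "j < k" and j: "real k * (a p + a (T + j * p) - a (T + Suc j * p))
                                   \<le> real k * a p + a T - a (T + k * p)"
    using exists_defect_le_average[OF \<open>k \<ge> 1\<close>] by blast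
  define m where "m = T + j * p"
  have "j * p < k * p"
    using \<open>j < k\<close> \<open>p \<ge> 1\<close> by simp
  moreover have "T \<ge> p"
    using \<open>k \<ge> 1\<close> by (simp add: T_def)
  ultimately have m: "T \<le> m" "m < 2 * T" "p \<le> m"
    by (auto simp: m_def T_def intro: le_trans[of p T])
  have "real k * a p + a T - a (T + k * p) < real k * (\<delta> * (real p * A) / 2)"
  proof -
    have "real k * a p < real T * (A + \<delta> * A / 4)"
      using upper[of p] \<open>N \<le> p\<close> \<open>k \<ge> 1\<close> by (simp add: T_def mult.assoc)
    moreover have "a T < real T * (A + \<delta> * A / 4)"
      using upper \<open>N \<le> p\<close> \<open>T \<ge> p\<close> by simp
    moreover have "2 * real T * A \<le> a (T + k * p)"
      using lower[of "T + k * p"] \<open>T \<ge> p\<close> \<open>p \<ge> 1\<close> by (simp add: T_def[symmetric] algebra_simps)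
    ultimately show ?thesis
      by (simp add: T_def algebra_simps)
  qed
  moreover have "real k * (a p + a m - a (p + m)) \<le> real k * a p + a T - a (T + k * p)"
    using j by (simp add: m_def algebra_simps)
  ultimately have "real k * (a p + a m - a (p + m)) < real k * (\<delta> * (real p * A) / 2)"
    by linarith
  then have "a p + a m - a (p + m) < \<delta> * (real p * A) / 2"
    by (rule mult_left_less_imp_less) simp
  also have "\<dots> < \<delta> * (real p * A)"
    using assms(1-3) by simp
  also have "\<dots> \<le> \<delta> * min (a p) (a m)"
    using linear_lower_bound_le[of A a p p] linear_lower_bound_le[of A a p m] assms(1-3) lower m
    by (intro mult_left_mono) auto
  finally show ?thesis
    using that m by (simp add: T_def)
qed

lemma small_defect_in_block:
  fixes a :: "nat \<Rightarrow> real"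
  assumes "A > 0" "\<delta> > 0" "T \<ge> 1" "N \<le> T"
    and lower: "\<And>n. n \<ge> 1 \<Longrightarrow> real n * A \<le> a n"
    and upper: "\<And>n. n \<ge> N \<Longrightarrow> a n < real n * (A + \<delta> * A / 4)"
    and "T \<le> m" "m < 2 * T" "T \<le> m'" "m' < 2 * T"
  shows "a m + a m' - a (m + m') < \<delta> * min (a m) (a m')"
proof -
  have "a m + a m' - a (m + m') < real m * (A + \<delta> * A / 4) + real m' * (A + \<delta> * A / 4) - real (m + m') * A"
    using upper[of m] upper[of m'] lower[of "m + m'"] assms(3,4,7,9) by simp
  also have "\<dots> = real (m + m') * (\<delta> * A / 4)"
    by (simp add: algebra_simps)
  also have "\<dots> \<le> real (4 * T) * (\<delta> * A / 4)"
    using assms(1,2,8,10) by (intro mult_right_mono) auto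
  also have "\<dots> = \<delta> * (real T * A)"
    by simp
  also have "\<dots> \<le> \<delta> * min (a m) (a m')"
  proof -
    have "real T * A \<le> a m" "real T * A \<le> a m'"
      using linear_lower_bound_le[OF _ lower] assms(1,3,7,9) by auto
    then show ?thesis
      using \<open>\<delta> > 0\<close> by (intro mult_left_mono) auto
  qed
  finally show ?thesis .
qed

lemma small_defect_chain:
  fixes a :: "nat \<Rightarrow> real"
  assumes "A > 0" "\<delta> > 0" "N \<ge> 1" "N \<le> n" "N \<le> n'"
    and lower: "\<And>j. j \<ge> 1 \<Longrightarrow> real j * A \<le> a j"
    and upper: "\<And>j. j \<ge> N \<Longrightarrow> a j < real j * (A + \<delta> * A / 4)"
  obtains m m' where "n \<le> m" "n' \<le> m'"
    "a n + a m - a (n + m) < \<delta> * min (a n) (a m)"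
    "a m + a m' - a (m + m') < \<delta> * min (a m) (a m')"
    "a n' + a m' - a (n' + m') < \<delta> * min (a n') (a m')"
proof -
  define T where "T = n * n'"
  have "n \<ge> 1" "n' \<ge> 1"
    using assms(3-5) by simp_all
  obtain m where m: "n' * n \<le> m" "m < 2 * (n' * n)" "a n + a m - a (n + m) < \<delta> * min (a n) (a m)"
    using small_defect_partner[OF \<open>A > 0\<close> \<open>\<delta> > 0\<close> \<open>n \<ge> 1\<close> \<open>n' \<ge> 1\<close> \<open>N \<le> n\<close> lower upper] .
  obtain m' where m': "n * n' \<le> m'" "m' < 2 * (n * n')" "a n' + a m' - a (n' + m') < \<delta> * min (a n') (a m')"
    using small_defect_partner[OF \<open>A > 0\<close> \<open>\<delta> > 0\<close> \<open>n' \<ge> 1\<close> \<open>n \<ge> 1\<close> \<open>N \<le> n'\<close> lower upper] .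
  have "n \<le> T" "n' \<le> T"
    using \<open>n \<ge> 1\<close> \<open>n' \<ge> 1\<close> by (simp_all add: T_def)
  then have "T \<ge> 1" "N \<le> T"
    using assms(3,4) by simp_all
  moreover have "T \<le> m" "m < 2 * T" "T \<le> m'" "m' < 2 * T"
    using m(1,2) m'(1,2) by (simp_all add: T_def mult.commute)
  ultimately have "a m + a m' - a (m + m') < \<delta> * min (a m) (a m')"
    using small_defect_in_block[OF \<open>A > 0\<close> \<open>\<delta> > 0\<close> _ _ lower upper] by blast
  moreover have "n \<le> m" "n' \<le> m'"
    using \<open>n \<le> T\<close> \<open>n' \<le> T\<close> \<open>T \<le> m\<close> \<open>T \<le> m'\<close> by simp_all
  ultimately show thesis
    using that m(3) m'(3) by blast
qed

lemma Cauchy_if_small_defect_implies_close: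
  fixes a :: "nat \<Rightarrow> real" and u :: "nat \<Rightarrow> 'a::metric_space"
  assumes "A > 0"
    and lower: "\<And>n. n \<ge> 1 \<Longrightarrow> real n * A \<le> a n"
    and lim: "(\<lambda>n. a n / real n) \<longlonglongrightarrow> A"
    and close: "\<And>\<epsilon>. \<epsilon> > 0 \<Longrightarrow> \<exists>\<delta>>0. \<forall>n\<ge>1. \<forall>m\<ge>1.
                  a n + a m - a (n + m) < \<delta> * min (a n) (a m) \<longrightarrow> dist (u n) (u m) < \<epsilon>"
  shows "Cauchy u"
proof (rule metric_CauchyI)
  fix \<epsilon> :: real
  assume "\<epsilon> > 0"
  then obtain \<delta> where "\<delta> > 0" and \<delta>: "\<And>n m. n \<ge> 1 \<Longrightarrow> m \<ge> 1 \<Longrightarrow>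
      a n + a m - a (n + m) < \<delta> * min (a n) (a m) \<Longrightarrow> dist (u n) (u m) < \<epsilon> / 3"
    using close[of "\<epsilon> / 3"] by auto
  have "eventually (\<lambda>n. a n / real n < A + \<delta> * A / 4) sequentially"
    using lim \<open>\<delta> > 0\<close> \<open>A > 0\<close> by (intro order_tendstoD) auto
  then obtain N0 where N0: "\<And>n. n \<ge> N0 \<Longrightarrow> a n / real n < A + \<delta> * A / 4"
    by (auto simp: eventually_sequentially)
  define N where "N = max N0 1"
  have "N \<ge> 1"
    by (simp add: N_def)
  have upper: "a n < real n * (A + \<delta> * A / 4)" if "n \<ge> N" for n
    using N0[of n] that by (simp add: N_def field_simps)
  show "\<exists>N. \<forall>n\<ge>N. \<forall>n'\<ge>N. dist (u n) (u n') < \<epsilon>"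
  proof (intro exI allI impI)
    fix n n' assume "n \<ge> N" "n' \<ge> N"
    then obtain m m' where "n \<le> m" "n' \<le> m'"
      "a n + a m - a (n + m) < \<delta> * min (a n) (a m)"
      "a m + a m' - a (m + m') < \<delta> * min (a m) (a m')"
      "a n' + a m' - a (n' + m') < \<delta> * min (a n') (a m')"
      using small_defect_chain[OF \<open>A > 0\<close> \<open>\<delta> > 0\<close> \<open>N \<ge> 1\<close> _ _ lower upper] by blast
    moreover have "n \<ge> 1" "n' \<ge> 1"
      using \<open>n \<ge> N\<close> \<open>n' \<ge> N\<close> \<open>N \<ge> 1\<close> by simp_all
    ultimately have "dist (u n) (u m) < \<epsilon> / 3" "dist (u m) (u m') < \<epsilon> / 3" "dist (u n') (u m') < \<epsilon> / 3"
      using \<delta>[of n m] \<delta>[of m m'] \<delta>[of n' m'] by auto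
    then show "dist (u n) (u n') < \<epsilon>"
      by (metis dist_commute dist_triangle_third)
  qed
qed

lemma norm_scaleR_add_unit_le:
  fixes x y :: "'a::real_normed_vector"
  assumes "norm x = 1" "norm y = 1" "0 \<le> \<alpha>" "0 \<le> \<beta>"
  shows "norm (\<alpha> *\<^sub>R x + \<beta> *\<^sub>R y) \<le> \<alpha> + \<beta> - (2 - norm (x + y)) * min \<alpha> \<beta>"
proof -
  have ordered: "norm (\<alpha> *\<^sub>R x + \<beta> *\<^sub>R y) \<le> \<alpha> + \<beta> - (2 - norm (x + y)) * \<alpha>"
    if "norm y = 1" "0 \<le> \<alpha>" "\<alpha> \<le> \<beta>" for x y :: 'a and \<alpha> \<beta> :: real
  proof -
    have "norm (\<alpha> *\<^sub>R x + \<beta> *\<^sub>R y) = norm (\<alpha> *\<^sub>R (x + y) + (\<beta> - \<alpha>) *\<^sub>R y)"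
      by (simp add: algebra_simps)
    also have "\<dots> \<le> norm (\<alpha> *\<^sub>R (x + y)) + norm ((\<beta> - \<alpha>) *\<^sub>R y)"
      by (rule norm_triangle_ineq)
    also have "\<dots> = \<alpha> * norm (x + y) + (\<beta> - \<alpha>)"
      using that by simp
    finally show ?thesis
      by (simp add: algebra_simps)
  qed
  show ?thesis
  proof (cases "\<alpha> \<le> \<beta>")
    case True
    then show ?thesis
      using ordered[of y \<alpha> \<beta> x] assms by simp
  next
    case False
    then show ?thesis
      using ordered[of x \<beta> \<alpha> y] assms by (simp add: add.commute)
  qed
qed

lemma uniformly_convex_set_small_defect_imp_close:
  fixes S :: "'a::real_normed_vector set"
  assumes "uniformly_convex_set S" "\<epsilon> > 0"
  obtains \<delta> where "\<delta> > 0"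
    "\<And>x y. x \<noteq> 0 \<Longrightarrow> y \<noteq> 0 \<Longrightarrow> sgn x \<in> S \<Longrightarrow> sgn y \<in> S \<Longrightarrow>
       norm x + norm y - norm (x + y) < \<delta> * min (norm x) (norm y) \<Longrightarrow> dist (sgn x) (sgn y) < \<epsilon>"
proof -
  obtain \<delta> where "\<delta> > 0" and \<delta>: "\<forall>u\<in>S. \<forall>v\<in>S. norm u = 1 \<longrightarrow> norm v = 1 \<longrightarrow>
      norm (u - v) \<ge> \<epsilon> \<longrightarrow> norm (u + v) \<le> 2 - \<delta>"
    using assms unfolding uniformly_convex_set_def by blast
  have "dist (sgn x) (sgn y) < \<epsilon>"
    if "x \<noteq> 0" "y \<noteq> 0" "sgn x \<in> S" "sgn y \<in> S"
      and defect: "norm x + norm y - norm (x + y) < \<delta> * min (norm x) (norm y)" for x y :: 'a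
  proof (rule ccontr)
    assume "\<not> dist (sgn x) (sgn y) < \<epsilon>"
    then have "\<delta> \<le> 2 - norm (sgn x + sgn y)"
      using \<delta>[rule_format, of "sgn x" "sgn y"] that(1-4) by (simp add: dist_norm norm_sgn not_less)
    then have "\<delta> * min (norm x) (norm y) \<le> (2 - norm (sgn x + sgn y)) * min (norm x) (norm y)"
      by (intro mult_right_mono) auto
    moreover have "norm (norm x *\<^sub>R sgn x + norm y *\<^sub>R sgn y)
        \<le> norm x + norm y - (2 - norm (sgn x + sgn y)) * min (norm x) (norm y)"
      using that(1,2) by (intro norm_scaleR_add_unit_le) (auto simp: norm_sgn)
    moreover have "norm x *\<^sub>R sgn x = x" "norm y *\<^sub>R sgn y = y"
      using that(1,2) by (simp_all add: sgn_div_norm)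
    ultimately show False
      using defect by simp
  qed
  with \<open>\<delta> > 0\<close> show thesis
    using that by blast
qed

lemma Cauchy_sgn_if_uniformly_convex:
  fixes v :: "nat \<Rightarrow> 'a::real_normed_vector"
  assumes "A > 0"
    and lower: "\<And>n. n \<ge> 1 \<Longrightarrow> real n * A \<le> norm (v n)"
    and lim: "(\<lambda>n. norm (v n) / real n) \<longlonglongrightarrow> A"
    and subadd: "\<And>n m. n \<ge> 1 \<Longrightarrow> m \<ge> 1 \<Longrightarrow> norm (v (n + m)) \<le> norm (v n + v m)"
    and convex: "uniformly_convex_set ((\<lambda>n. sgn (v n)) ` {1..})"
  shows "Cauchy (\<lambda>n. sgn (v n))"
proof (rule Cauchy_if_small_defect_implies_close[OF \<open>A > 0\<close> lower lim])
  fix \<epsilon> :: real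
  assume "\<epsilon> > 0"
  obtain \<delta> where "\<delta> > 0" and \<delta>: "\<And>x y. x \<noteq> 0 \<Longrightarrow> y \<noteq> 0 \<Longrightarrow>
      sgn x \<in> (\<lambda>n. sgn (v n)) ` {1..} \<Longrightarrow> sgn y \<in> (\<lambda>n. sgn (v n)) ` {1..} \<Longrightarrow>
      norm x + norm y - norm (x + y) < \<delta> * min (norm x) (norm y) \<Longrightarrow> dist (sgn x) (sgn y) < \<epsilon>"
    using uniformly_convex_set_small_defect_imp_close[OF convex \<open>\<epsilon> > 0\<close>] by blast
  have nonzero: "v n \<noteq> 0" if "n \<ge> 1" for n
    using lower[OF that] that \<open>A > 0\<close> by (auto simp: mult_le_0_iff)
  have "dist (sgn (v n)) (sgn (v m)) < \<epsilon>"
    if "n \<ge> 1" "m \<ge> 1" "norm (v n) + norm (v m) - norm (v (n + m)) < \<delta> * min (norm (v n)) (norm (v m))"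
    for n m
    using \<delta>[of "v n" "v m"] subadd[of n m] nonzero that by auto
  with \<open>\<delta> > 0\<close> show "\<exists>\<delta>>0. \<forall>n\<ge>1. \<forall>m\<ge>1.
      norm (v n) + norm (v m) - norm (v (n + m)) < \<delta> * min (norm (v n)) (norm (v m))
      \<longrightarrow> dist (sgn (v n)) (sgn (v m)) < \<epsilon>"
    by blast
qed

lemma convergent_quotient_if_Cauchy_sgn:
  fixes v :: "nat \<Rightarrow> 'a::banach"
  assumes lim: "(\<lambda>n. norm (v n) / real n) \<longlonglongrightarrow> A"
    and "A = 0 \<or> Cauchy (\<lambda>n. sgn (v n))"
  shows "\<exists>L. (\<lambda>n. v n /\<^sub>R real n) \<longlonglongrightarrow> L"
  using \<open>A = 0 \<or> Cauchy (\<lambda>n. sgn (v n))\<close>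
proof
  assume "A = 0"
  with lim have "(\<lambda>n. norm (v n /\<^sub>R real n)) \<longlonglongrightarrow> 0"
    by (simp add: divide_inverse mult.commute)
  then show ?thesis
    by (blast intro: tendsto_norm_zero_cancel)
next
  assume "Cauchy (\<lambda>n. sgn (v n))"
  then obtain U where "(\<lambda>n. sgn (v n)) \<longlonglongrightarrow> U"
    by (auto simp: Cauchy_convergent_iff convergent_def)
  with lim have "(\<lambda>n. (norm (v n) / real n) *\<^sub>R sgn (v n)) \<longlonglongrightarrow> A *\<^sub>R U"
    by (rule tendsto_scaleR)
  moreover have "(norm (v n) / real n) *\<^sub>R sgn (v n) = v n /\<^sub>R real n" for n
    by (cases "v n = 0") (simp_all add: sgn_div_norm inverse_eq_divide)
  ultimately show ?thesis
    by auto
qed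

theorem mainTheorem7:
  fixes v :: "nat \<Rightarrow> 'a::banach"
  assumes subadd: "\<And>n m. n \<ge> 1 \<Longrightarrow> m \<ge> 1 \<Longrightarrow> norm (v (n + m)) \<le> norm (v n + v m)"
    and cases: "(\<exists>i\<ge>1. v i = 0) \<or>
               ((\<forall>n\<ge>1. v n \<noteq> 0) \<and>
                uniformly_convex_set ((\<lambda>n. v n /\<^sub>R norm (v n)) ` {1..}))"
  shows "\<exists>L. ((\<lambda>n. v n /\<^sub>R real n) \<longlongrightarrow> L) sequentially"
proof -
  define A where "A = (INF n\<in>{1..}. norm (v n) / real n)"
  have norm_subadd: "norm (v (n + m)) \<le> norm (v n) + norm (v m)" if "n \<ge> 1" "m \<ge> 1" for n m
    using subadd[OF that] norm_triangle_ineq order_trans by blast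
  have lim: "(\<lambda>n. norm (v n) / real n) \<longlonglongrightarrow> A"
    unfolding A_def by (rule subadditive_quotient_tendsto_Inf[OF _ norm_subadd]) simp_all
  have lower: "real n * A \<le> norm (v n)" if "n \<ge> 1" for n
    unfolding A_def by (rule mult_Inf_quotient_le[OF _ that]) simp
  have "Cauchy (\<lambda>n. sgn (v n))" if "A \<noteq> 0"
  proof -
    have "A \<ge> 0"
      unfolding A_def by (rule cINF_greatest) auto
    with that have "A > 0"
      by simp
    then have "v i \<noteq> 0" if "i \<ge> 1" for i
      using lower[OF that] that by (auto simp: mult_le_0_iff)
    with cases have convex: "uniformly_convex_set ((\<lambda>n. sgn (v n)) ` {1..})"
      by (auto simp: sgn_div_norm)
    show ?thesis
      by (rule Cauchy_sgn_if_uniformly_convex[OF \<open>A > 0\<close> _ lim subadd convex]) (rule lower)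
  qed
  then show ?thesis
    using convergent_quotient_if_Cauchy_sgn[OF lim] by blast
qed

end
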